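(* Let $m,n$ be coprime positive integers and let $(A,B)\in\mathrm{SL}(2,\mathbb{C})^2$ satisfy $A^m=B^n$ (i.e. $(A,B)$ defines a representation $\rho$ of $G_{m,n}=\langle x,y\mid x^m=y^n\rangle$ into $\mathrm{SL}(2,\mathbb{C})$ with $\rho(x)=A$, $\rho(y)=B$). If any of the following holds: (a) $A^m=B^n\neq\pm\mathrm{Id}$; (b) $A=\pm\mathrm{Id}$ or $B=\pm\mathrm{Id}$; (c) $A$ or $B$ is not diagonalizable, then $\rho$ is reducible, i.e. $A$ and $B$ have a common eigenvector. *)

theory Defs
  imports "HOL-Analysis.Analysis"
begin

type_synonym cmat2 = "complex ^ 2 ^ 2"

primrec mat_pow :: "('a::comm_ring_1) ^ 'n ^ 'n \<Rightarrow> nat \<Rightarrow> 'a ^ 'n ^ 'n" where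
  "mat_pow A 0 = mat 1"
| "mat_pow A (Suc k) = A ** mat_pow A k"

definition in_SL2 :: "cmat2 \<Rightarrow> bool" where
  "in_SL2 A \<longleftrightarrow> det A = 1"

definition is_diagonal_mat :: "('a::zero) ^ 'n ^ 'n \<Rightarrow> bool" where
  "is_diagonal_mat D \<longleftrightarrow> (\<forall>i j. i \<noteq> j \<longrightarrow> D $ i $ j = 0)"

definition is_diagonalizable :: "('a::field) ^ 'n ^ 'n \<Rightarrow> bool" where
  "is_diagonalizable A \<longleftrightarrow>
     (\<exists>(P::'a^'n^'n) (Q::'a^'n^'n). P ** Q = mat 1 \<and> Q ** P = mat 1 \<and> is_diagonal_mat (Q ** A ** P))"

definition common_eigenvector :: "('a::field) ^ 'n ^ 'n \<Rightarrow> 'a ^ 'n ^ 'n \<Rightarrow> bool" where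
  "common_eigenvector A B \<longleftrightarrow>
     (\<exists>v lam mu. v \<noteq> 0 \<and> A *v v = lam *s v \<and> B *v v = mu *s v)"

end

theory Submission
  imports Defs
begin

text \<open>
  If \<open>C = A\<^sup>m = B\<^sup>n\<close> is not a scalar matrix, it commutes with \<open>A\<close> and \<open>B\<close>
  and, being a non-scalar \<open>2\<times>2\<close> matrix, has one-dimensional eigenspaces;
  \<open>A\<close> and \<open>B\<close> preserve the eigenspace of any eigenvector of \<open>C\<close>, which is therefore a
  common eigenvector. If \<open>C\<close> is scalar, then \<open>C = \<plusminus>1\<close> since \<open>det C = 1\<close>, and both
  \<open>A\<close> and \<open>B\<close> are diagonalizable: an invertible \<open>2\<times>2\<close> matrix with a repeated
  eigenvalue \<open>l\<close> is \<open>l + N\<close> with \<open>N\<^sup>2 = 0\<close>, and its \<open>m\<close>-th power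
  \<open>l\<^sup>m + m l\<^sup>m\<^sup>-\<^sup>1 N\<close> is scalar only if \<open>N = 0\<close>. So the hypothesis leaves only the
  case that \<open>A\<close> or \<open>B\<close> is \<open>\<plusminus>1\<close>, where any eigenvector of the other matrix works.
\<close>

lemma mat_mult_left: "mat a ** A = (\<chi> i j. a * A $ i $ j)"
  by (simp add: vec_eq_iff matrix_matrix_mult_def mat_def if_distrib if_distribR sum.delta cong: if_cong)

lemma mat_mult_right: "A ** mat a = (\<chi> i j. A $ i $ j * a)"
  by (simp add: vec_eq_iff matrix_matrix_mult_def mat_def if_distrib if_distribR sum.delta' cong: if_cong)

lemma mat_mult_mat: "mat a ** mat b = (mat (a * b) :: 'a::semiring_1^'n^'n)"
  unfolding mat_mult_left by (simp add: vec_eq_iff mat_def)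

lemma mat_mult_commute: "mat a ** A = A ** (mat a :: 'a::comm_semiring_1^'n^'n)"
  by (simp add: mat_mult_left mat_mult_right mult.commute)

lemma mat_add_mat: "mat a + mat b = (mat (a + b) :: 'a::monoid_add^'n^'n)"
  by (simp add: vec_eq_iff mat_def)

lemma mat_eq_iff: "(mat a :: 'a::zero^'n^'n) = mat b \<longleftrightarrow> a = b"
  by (auto simp: vec_eq_iff mat_def)

lemma mat_diff_mat: "mat a - mat b = (mat (a - b) :: 'a::group_add^'n^'n)"
  by (simp add: vec_eq_iff mat_def)

lemma uminus_mat: "- mat a = (mat (- a) :: 'a::group_add^'n^'n)"
  by (simp add: vec_eq_iff mat_def)

lemma mat_vector_mult: "mat a *v v = a *s (v :: 'a::semiring_1^'n)"
  by (simp add: vec_eq_iff matrix_vector_mult_def mat_def if_distrib if_distribR sum.delta cong: if_cong)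

lemma matrix_add_rdistrib: "(A + B) ** C = A ** C + B ** (C :: 'a::semiring_1^'n^'m)"
  by (simp add: vec_eq_iff matrix_matrix_mult_def sum.distrib distrib_right)

lemma mat_pow_commute: "A ** mat_pow A k = mat_pow A k ** A"
  by (induction k) (simp_all add: matrix_mul_assoc)

lemma det_mat_pow: "det (mat_pow A k) = det A ^ k"
  by (induction k) (simp_all add: det_mul)

lemma mat_pow_mat_plus_square_zero:
  fixes N :: "'a::comm_ring_1^'n^'n"
  assumes "N ** N = 0"
  shows "mat_pow (mat l + N) (Suc k) = mat (l ^ Suc k) + mat (of_nat (Suc k) * l ^ k) ** N"
proof (induction k)
  case 0
  then show ?case by simp
next
  case (Suc k)
  define a b where "a = l ^ Suc k" and "b = of_nat (Suc k) * l ^ k"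
  have "mat_pow (mat l + N) (Suc (Suc k)) = (mat l + N) ** (mat a + mat b ** N)"
    by (subst mat_pow.simps(2)) (simp only: Suc a_def b_def)
  also have "\<dots> = mat (l * a) + mat (l * b) ** N + mat a ** N + N ** mat b ** N"
    by (simp add: matrix_add_ldistrib matrix_add_rdistrib mat_mult_mat matrix_mul_assoc
        mat_mult_commute[of a N] add.assoc)
  also have "N ** mat b ** N = 0"
    by (metis assms mat_mult_commute matrix_mul_assoc times0_left)
  also have "mat (l * a) + mat (l * b) ** N + mat a ** N + 0
      = mat (l ^ Suc (Suc k)) + mat (of_nat (Suc (Suc k)) * l ^ Suc k) ** N"
    by (simp add: a_def b_def matrix_add_rdistrib[symmetric] mat_add_mat add.assoc algebra_simps)
  finally show ?case .
qed

lemma eigenvector_if_det_eq_0: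
  fixes M :: "'a::field^'n^'n"
  assumes "det (M - mat l) = 0"
  shows "\<exists>v. v \<noteq> 0 \<and> M *v v = l *s v"
proof -
  have "\<not> invertible (M - mat l)"
    using assms invertible_det_nz by blast
  then obtain v where "v \<noteq> 0" "(M - mat l) *v v = 0"
    unfolding invertible_left_inverse matrix_left_invertible_ker by blast
  then show ?thesis
    by (auto simp: matrix_vector_mult_diff_rdistrib mat_vector_mult)
qed

lemma common_eigenvector_commute: "common_eigenvector A B \<longleftrightarrow> common_eigenvector B A"
  unfolding common_eigenvector_def by blast

lemma common_eigenvector_if_commute_with_simple_eigenvalue:
  fixes A B C :: "'a::field^'n^'n"
  assumes v: "v \<noteq> 0" "C *v v = l *s v"
    and "\<And>w. C *v w = l *s w \<Longrightarrow> \<exists>\<alpha>. w = \<alpha> *s v"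
    and "A ** C = C ** A" "B ** C = C ** B"
  shows "common_eigenvector A B"
proof -
  have "C *v (X *v v) = l *s (X *v v)" if "X ** C = C ** X" for X
    by (metis that v(2) matrix_vector_mul_assoc vec.scale)
  then obtain \<alpha> \<beta> where "A *v v = \<alpha> *s v" "B *v v = \<beta> *s v"
    using assms(3-5) by meson
  then show ?thesis
    unfolding common_eigenvector_def using v(1) by blast
qed

lemma is_diagonalizable_if_similar_diagonal:
  fixes M P D :: "'a::field^'n^'n"
  assumes "invertible P" "M ** P = P ** D" "is_diagonal_mat D"
  shows "is_diagonalizable M"
proof -
  obtain Q where PQ: "P ** Q = mat 1" "Q ** P = mat 1"
    using assms(1) unfolding invertible_def by blast
  then have "Q ** M ** P = D"
    by (metis assms(2) matrix_mul_assoc matrix_mul_lid)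
  then show ?thesis
    unfolding is_diagonalizable_def using PQ assms(3) by blast
qed

lemma is_diagonalizable_mat: "is_diagonalizable (mat c :: 'a::field^'n^'n)"
  unfolding is_diagonalizable_def is_diagonal_mat_def
  by (rule exI[of _ "mat 1"], rule exI[of _ "mat 1"]) (simp add: mat_def[of c])

definition cols2 :: "'a^2 \<Rightarrow> 'a^2 \<Rightarrow> 'a^2^2" where
  "cols2 x y = (\<chi> i j. if j = 1 then x $ i else y $ i)"

lemma cols2_nth [simp]: "cols2 x y $ i $ 1 = x $ i" "cols2 x y $ i $ 2 = y $ i"
  by (simp_all add: cols2_def)

lemma det_cols2: "det (cols2 x y) = x $ 1 * y $ 2 - y $ 1 * x $ 2"
  by (simp add: det_2)

lemma matrix_mult_cols2: "M ** cols2 x y = cols2 (M *v x) (M *v y)"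
  by (simp add: vec_eq_iff forall_2 matrix_matrix_mult_def matrix_vector_mult_def)

lemma proportional_if_det_cols2_eq_0:
  fixes x y :: "'a::field^2"
  assumes "x \<noteq> 0" "det (cols2 x y) = 0"
  shows "\<exists>\<alpha>. y = \<alpha> *s x"
proof (cases "x $ 1 = 0")
  case True
  then have "x $ 2 \<noteq> 0"
    using assms(1) by (auto simp: vec_eq_iff forall_2)
  then have "y = (y $ 2 / x $ 2) *s x"
    using True assms(2) by (simp add: det_cols2 vec_eq_iff forall_2 field_simps)
  then show ?thesis ..
next
  case False
  then have "y = (y $ 1 / x $ 1) *s x"
    using assms(2) by (simp add: det_cols2 vec_eq_iff forall_2 field_simps)
  then show ?thesis ..
qed

lemma det_cols2_neq_0_if_eigenvalues_distinct:
  fixes M :: "'a::field^2^2"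
  assumes "x \<noteq> 0" "M *v x = a *s x" "y \<noteq> 0" "M *v y = b *s y" "a \<noteq> b"
  shows "det (cols2 x y) \<noteq> 0"
proof
  assume "det (cols2 x y) = 0"
  then obtain \<alpha> where \<alpha>: "y = \<alpha> *s x"
    using proportional_if_det_cols2_eq_0 assms(1) by blast
  have "b *s y = \<alpha> *s (M *v x)"
    using assms(4) \<alpha> by (simp add: vec.scale)
  also have "\<dots> = a *s y"
    using assms(2) \<alpha> by (simp add: vector_smult_assoc mult.commute[of \<alpha>])
  finally show False
    using assms(3,5) by (metis vector_sub_rdistrib vector_mul_eq_0 right_minus_eq)
qed

lemma eigenvectors_proportional_if_not_mat:
  fixes M :: "'a::field^2^2"
  assumes "M \<noteq> mat l" "x \<noteq> 0" "M *v x = l *s x" "M *v y = l *s y"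
  shows "\<exists>\<alpha>. y = \<alpha> *s x"
proof (rule proportional_if_det_cols2_eq_0[OF assms(2)], rule ccontr)
  assume "det (cols2 x y) \<noteq> 0"
  then obtain Q where "cols2 x y ** Q = mat 1"
    using invertible_det_nz invertible_right_inverse by blast
  moreover have "M ** cols2 x y = mat l ** cols2 x y"
    using assms(3,4) by (simp add: matrix_mult_cols2 mat_vector_mult)
  ultimately have "M = mat l"
    by (metis matrix_mul_assoc matrix_mul_rid)
  with assms(1) show False ..
qed

lemma is_diagonalizable_if_eigenvalues_distinct:
  fixes M :: "'a::field^2^2"
  assumes "x \<noteq> 0" "M *v x = a *s x" "y \<noteq> 0" "M *v y = b *s y" "a \<noteq> b"
  shows "is_diagonalizable M"
proof (rule is_diagonalizable_if_similar_diagonal)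
  show "invertible (cols2 x y)"
    using det_cols2_neq_0_if_eigenvalues_distinct[OF assms] invertible_det_nz by blast
  show "M ** cols2 x y = cols2 x y ** (\<chi> i j. if i = j then if i = 1 then a else b else 0)"
    unfolding matrix_mult_cols2 assms(2,4)
    by (simp add: vec_eq_iff forall_2 matrix_matrix_mult_def sum_2 mult.commute)
  show "is_diagonal_mat (\<chi> i j. if i = j then if i = 1 then a else b else 0 :: 'a^2^2)"
    by (simp add: is_diagonal_mat_def)
qed

lemma det_minus_mat_2: "det (M - mat z) = z^2 - trace M * z + det (M :: 'a::comm_ring_1^2^2)"
  by (simp add: det_2 trace_def sum_2 mat_def algebra_simps power2_eq_square)

lemma det_minus_mat_half_trace_plus_root:
  fixes M :: "'a::field_char_0^2^2"
  assumes "s^2 = trace M ^ 2 - 4 * det M"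
  shows "det (M - mat ((trace M + s) / 2)) = 0"
  using assms by (simp add: det_minus_mat_2 field_simps power2_eq_square) algebra

lemma square_zero_if_discriminant_eq_0:
  fixes M :: "'a::field_char_0^2^2"
  assumes "trace M ^ 2 = 4 * det M"
  shows "(M - mat (trace M / 2)) ** (M - mat (trace M / 2)) = 0"
  using assms
  by (simp add: vec_eq_iff forall_2 matrix_matrix_mult_def sum_2 det_2 trace_def mat_def
      field_simps power2_eq_square) algebra

lemma cmat2_has_eigenvector: "\<exists>v l. v \<noteq> 0 \<and> (M :: cmat2) *v v = l *s v"
  by (metis eigenvector_if_det_eq_0 det_minus_mat_half_trace_plus_root power2_csqrt)

lemma common_eigenvector_mat: "common_eigenvector (mat c) (B :: cmat2)"
proof -
  obtain v l where "v \<noteq> 0" "B *v v = l *s v"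
    using cmat2_has_eigenvector by blast
  then show ?thesis
    unfolding common_eigenvector_def by (metis mat_vector_mult)
qed

lemma common_eigenvector_if_commute_with_not_mat:
  fixes A B C :: cmat2
  assumes "\<And>\<mu>. C \<noteq> mat \<mu>" "A ** C = C ** A" "B ** C = C ** B"
  shows "common_eigenvector A B"
proof -
  obtain v l where v: "v \<noteq> 0" "C *v v = l *s v"
    using cmat2_has_eigenvector by blast
  show ?thesis
    using common_eigenvector_if_commute_with_simple_eigenvalue[OF v _ assms(2,3)]
      eigenvectors_proportional_if_not_mat[OF assms(1) v] by blast
qed

lemma square_eq_1_if_mat_pow_eq_mat:
  fixes A :: "'a::comm_ring_1^2^2"
  assumes "det A = 1" "mat_pow A m = mat \<mu>"
  shows "\<mu> ^ 2 = 1"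
  using det_mat_pow[of A m] assms by (simp add: det_2 mat_def power2_eq_square)

lemma is_diagonalizable_if_mat_pow_eq_mat:
  fixes M :: cmat2
  assumes "det M \<noteq> 0" "m > 0" "mat_pow M m = mat \<mu>"
  shows "is_diagonalizable M"
proof (cases "trace M ^ 2 = 4 * det M")
  case False
  define s where "s = csqrt (trace M ^ 2 - 4 * det M)"
  have s2: "s ^ 2 = trace M ^ 2 - 4 * det M" "(- s) ^ 2 = trace M ^ 2 - 4 * det M"
    by (simp_all add: s_def)
  obtain x where "x \<noteq> 0" "M *v x = ((trace M + s) / 2) *s x"
    using eigenvector_if_det_eq_0[OF det_minus_mat_half_trace_plus_root[OF s2(1)]] by blast
  moreover obtain y where "y \<noteq> 0" "M *v y = ((trace M + - s) / 2) *s y"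
    using eigenvector_if_det_eq_0[OF det_minus_mat_half_trace_plus_root[OF s2(2)]] by blast
  moreover have "(trace M + s) / 2 \<noteq> (trace M + - s) / 2"
    using False s2(1) by auto
  ultimately show ?thesis
    by (rule is_diagonalizable_if_eigenvalues_distinct)
next
  case True
  define l where "l = trace M / 2"
  define N where "N = M - mat l"
  have N2: "N ** N = 0"
    using square_zero_if_discriminant_eq_0[OF True] by (simp add: N_def l_def)
  have "l ^ 2 = det M"
    using True by (simp add: l_def power_divide)
  then have "l \<noteq> 0"
    using assms(1) by auto
  obtain k where m: "m = Suc k"
    using assms(2) gr0_implies_Suc by blast
  define c where "c = of_nat m * l ^ k"
  have "c \<noteq> 0"
    using \<open>l \<noteq> 0\<close> by (simp add: c_def m del: of_nat_Suc)
  have "mat (l ^ m) + mat c ** N = mat \<mu>"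
    using mat_pow_mat_plus_square_zero[OF N2, of l k] assms(3) by (simp add: N_def m c_def)
  then have "mat c ** N = mat \<mu> - mat (l ^ m)"
    by (metis add_diff_cancel_left')
  then have N_mat: "N = mat ((\<mu> - l ^ m) / c)"
    using \<open>c \<noteq> 0\<close> matrix_mul_assoc[of "mat (1 / c)" "mat c" N]
    by (simp add: mat_mult_mat mat_diff_mat)
  then have "mat (((\<mu> - l ^ m) / c) ^ 2) = (0 :: cmat2)"
    using N2 by (simp add: mat_mult_mat power2_eq_square)
  then have "mat (((\<mu> - l ^ m) / c) ^ 2) = (mat 0 :: cmat2)"
    by simp
  then have "((\<mu> - l ^ m) / c) ^ 2 = 0"
    by (simp only: mat_eq_iff)
  then have "N = 0"
    using N_mat \<open>c \<noteq> 0\<close> by simp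
  then show ?thesis
    using is_diagonalizable_mat[of l] by (simp add: N_def)
qed

theorem lemma2p2:
  fixes m n :: nat and A B :: cmat2
  assumes "m > 0" and "n > 0" and "coprime m n"
    and "in_SL2 A" and "in_SL2 B"
    and "mat_pow A m = mat_pow B n"
    and "(mat_pow A m \<noteq> mat 1 \<and> mat_pow A m \<noteq> - mat 1)
         \<or> (A = mat 1 \<or> A = - mat 1 \<or> B = mat 1 \<or> B = - mat 1)
         \<or> (\<not> is_diagonalizable A \<or> \<not> is_diagonalizable B)"
  shows "common_eigenvector A B"
proof (cases "\<exists>\<mu>. mat_pow A m = mat \<mu>")
  case False
  show ?thesis
  proof (rule common_eigenvector_if_commute_with_not_mat)
    show "\<And>\<mu>. mat_pow A m \<noteq> mat \<mu>"
      using False by blast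
    show "A ** mat_pow A m = mat_pow A m ** A"
      by (rule mat_pow_commute)
    show "B ** mat_pow A m = mat_pow A m ** B"
      unfolding assms(6) by (rule mat_pow_commute)
  qed
next
  case True
  then obtain \<mu> where \<mu>: "mat_pow A m = mat \<mu>" "mat_pow B n = mat \<mu>"
    using assms(6) by auto
  have "mat_pow A m = mat 1 \<or> mat_pow A m = - mat 1"
    using square_eq_1_if_mat_pow_eq_mat[of A m \<mu>] assms(4) \<mu>(1)
    by (auto simp: in_SL2_def power2_eq_1_iff uminus_mat)
  moreover have "is_diagonalizable A" "is_diagonalizable B"
    using is_diagonalizable_if_mat_pow_eq_mat assms(1,2,4,5) \<mu> by (auto simp: in_SL2_def)
  ultimately have "\<exists>c. A = mat c \<or> B = mat c"
    using assms(7) unfolding uminus_mat by blast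
  then show ?thesis
    using common_eigenvector_mat common_eigenvector_commute by blast
qed

end
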